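(* Let $(H,R)$ be a finite-dimensional quasitriangular Hopf algebra and $\pi:H\to K$ a surjective Hopf algebra map. Let $L=\{((f\circ\pi)\otimes\mathrm{id})(R_{21}\cdot R)\mid f\in K^*\}\subseteq H$, let $L^+=L\cap\ker\epsilon$, let $K'=H/HL^+$ with quotient map $\pi':H\to K'$. Regard $\mathrm{Rep}_f(K)$ and $\mathrm{Rep}_f(K')$ as full braided tensor subcategories of $\mathrm{Rep}_f(H)$ via pullback along $\pi$ and $\pi'$. Then $\mathrm{Rep}_f(K')$ is the relative Müger centralizer of $\mathrm{Rep}_f(K)$ in $\mathrm{Rep}_f(H)$, i.e. a finite-dimensional $H$-module $Y$ lies in $\mathrm{Rep}_f(K')$ if and only if $c_{Y,X}c_{X,Y}=\mathrm{id}_{X\otimes Y}$ for all $X\in\mathrm{Rep}_f(K)$.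
   Context: $(H,R)$ quasitriangular: $R=\sum_iR_i\otimes R^i$ invertible with $(\Delta\otimes\mathrm{id})(R)=R_{13}R_{23}$, $(\mathrm{id}\otimes\Delta)(R)=R_{13}R_{12}$, $\tau\Delta(h)=R\Delta(h)R^{-1}$. $R_{21}=\sum_iR^i\otimes R_i$ and $R_{21}\cdot R$ is the product in $H\otimes H$. $L$ is a normal left coideal subalgebra of $H$, so $HL^+$ is a Hopf ideal and $K'$ is a quotient Hopf algebra. $\mathrm{Rep}_f(H)$ is the braided tensor category of finite-dimensional left $H$-modules with braiding $c_{X,Y}(x\otimes y)=\sum_iR^iy\otimes R_ix$; $K$ and $K'$ carry the quasitriangular structures $(\pi\otimes\pi)(R)$ and $(\pi'\otimes\pi')(R)$. *)

theory Defs
  imports Main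
begin

text \<open>Finite-dimensional Hopf algebras over a field 'k, given in coordinates with
respect to a basis indexed by a finite type 'a (so elements of H are 'a => 'k,
elements of H (x) H are 'a * 'a => 'k, etc.), via structure constants:
  e_a e_b = sum_c hm a b c e_c,  1 = sum_a hu a e_a,
  Delta e_a = sum_(b,c) hd a b c e_b (x) e_c,  eps e_a = he a,  S e_a = sum_b hS a b e_b.\<close>

record ('a, 'k) hopf_sc =
  hm :: "'a \<Rightarrow> 'a \<Rightarrow> 'a \<Rightarrow> 'k"
  hu :: "'a \<Rightarrow> 'k"
  hd :: "'a \<Rightarrow> 'a \<Rightarrow> 'a \<Rightarrow> 'k"
  he :: "'a \<Rightarrow> 'k"
  hS :: "'a \<Rightarrow> 'a \<Rightarrow> 'k"

definition kdelta :: "'a \<Rightarrow> 'a \<Rightarrow> 'k::field" where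
  "kdelta a b = (if a = b then 1 else 0)"

definition is_hopf :: "('a::finite, 'k::field) hopf_sc \<Rightarrow> bool" where
  "is_hopf H \<longleftrightarrow>
     (\<forall>a b c z. (\<Sum>w\<in>UNIV. hm H a b w * hm H w c z) = (\<Sum>w\<in>UNIV. hm H b c w * hm H a w z)) \<and>
     (\<forall>a z. (\<Sum>w\<in>UNIV. hu H w * hm H w a z) = kdelta a z \<and> (\<Sum>w\<in>UNIV. hu H w * hm H a w z) = kdelta a z) \<and>
     (\<forall>a x y z. (\<Sum>w\<in>UNIV. hd H a w z * hd H w x y) = (\<Sum>w\<in>UNIV. hd H a x w * hd H w y z)) \<and>
     (\<forall>a x. (\<Sum>w\<in>UNIV. he H w * hd H a w x) = kdelta a x \<and> (\<Sum>w\<in>UNIV. he H w * hd H a x w) = kdelta a x) \<and>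
     (\<forall>a b x y. (\<Sum>w\<in>UNIV. hm H a b w * hd H w x y) =
        (\<Sum>p\<in>UNIV. \<Sum>q\<in>UNIV. \<Sum>r\<in>UNIV. \<Sum>s\<in>UNIV. hd H a p q * hd H b r s * hm H p r x * hm H q s y)) \<and>
     (\<forall>x y. (\<Sum>w\<in>UNIV. hu H w * hd H w x y) = hu H x * hu H y) \<and>
     (\<forall>a b. (\<Sum>w\<in>UNIV. hm H a b w * he H w) = he H a * he H b) \<and>
     (\<Sum>w\<in>UNIV. hu H w * he H w) = 1 \<and>
     (\<forall>a z. (\<Sum>p\<in>UNIV. \<Sum>q\<in>UNIV. \<Sum>r\<in>UNIV. hd H a p q * hS H p r * hm H r q z) = he H a * hu H z) \<and>
     (\<forall>a z. (\<Sum>p\<in>UNIV. \<Sum>q\<in>UNIV. \<Sum>r\<in>UNIV. hd H a p q * hS H q r * hm H p r z) = he H a * hu H z)"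

definition t2mul :: "('a::finite, 'k::field) hopf_sc \<Rightarrow> ('a \<times> 'a \<Rightarrow> 'k) \<Rightarrow> ('a \<times> 'a \<Rightarrow> 'k) \<Rightarrow> ('a \<times> 'a \<Rightarrow> 'k)" where
  "t2mul H t s = (\<lambda>(x, y). \<Sum>a1\<in>UNIV. \<Sum>a2\<in>UNIV. \<Sum>b1\<in>UNIV. \<Sum>b2\<in>UNIV.
      t (a1, a2) * s (b1, b2) * hm H a1 b1 x * hm H a2 b2 y)"

definition t3mul :: "('a::finite, 'k::field) hopf_sc \<Rightarrow> ('a \<times> 'a \<times> 'a \<Rightarrow> 'k) \<Rightarrow> ('a \<times> 'a \<times> 'a \<Rightarrow> 'k) \<Rightarrow> ('a \<times> 'a \<times> 'a \<Rightarrow> 'k)" where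
  "t3mul H t s = (\<lambda>(x, y, z). \<Sum>a1\<in>UNIV. \<Sum>a2\<in>UNIV. \<Sum>a3\<in>UNIV. \<Sum>b1\<in>UNIV. \<Sum>b2\<in>UNIV. \<Sum>b3\<in>UNIV.
      t (a1, a2, a3) * s (b1, b2, b3) * hm H a1 b1 x * hm H a2 b2 y * hm H a3 b3 z)"

definition hcomult :: "('a::finite, 'k::field) hopf_sc \<Rightarrow> ('a \<Rightarrow> 'k) \<Rightarrow> ('a \<times> 'a \<Rightarrow> 'k)" where
  "hcomult H h = (\<lambda>(x, y). \<Sum>a\<in>UNIV. h a * hd H a x y)"

text \<open>Quasitriangular structure R = sum_(a,b) R a b e_a (x) e_b.\<close>

definition is_quasitriangular :: "('a::finite, 'k::field) hopf_sc \<Rightarrow> ('a \<Rightarrow> 'a \<Rightarrow> 'k) \<Rightarrow> bool" where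
  "is_quasitriangular H R \<longleftrightarrow>
     (let R2 = (\<lambda>(x, y). R x y); one2 = (\<lambda>(x, y). hu H x * hu H y) in
      (\<exists>Rinv. t2mul H R2 Rinv = one2 \<and> t2mul H Rinv R2 = one2 \<and>
         (\<forall>h. (\<lambda>(x, y). hcomult H h (y, x)) = t2mul H (t2mul H R2 (hcomult H h)) Rinv)) \<and>
      (\<lambda>(x, y, z). \<Sum>a\<in>UNIV. R a z * hd H a x y) =
         t3mul H (\<lambda>(x, y, z). R x z * hu H y) (\<lambda>(x, y, z). hu H x * R y z) \<and>
      (\<lambda>(x, y, z). \<Sum>b\<in>UNIV. R x b * hd H b y z) =
         t3mul H (\<lambda>(x, y, z). R x z * hu H y) (\<lambda>(x, y, z). R x y * hu H z))"

text \<open>Hopf algebra map pi : H -> K, pi e_a = sum_b pi a b f_b.\<close>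

definition is_hopf_map :: "('a::finite, 'k::field) hopf_sc \<Rightarrow> ('b::finite, 'k) hopf_sc \<Rightarrow> ('a \<Rightarrow> 'b \<Rightarrow> 'k) \<Rightarrow> bool" where
  "is_hopf_map H K p \<longleftrightarrow>
     (\<forall>a a' z. (\<Sum>c\<in>UNIV. hm H a a' c * p c z) = (\<Sum>b\<in>UNIV. \<Sum>b'\<in>UNIV. p a b * p a' b' * hm K b b' z)) \<and>
     (\<forall>z. (\<Sum>a\<in>UNIV. hu H a * p a z) = hu K z) \<and>
     (\<forall>a x y. (\<Sum>c\<in>UNIV. p a c * hd K c x y) = (\<Sum>q\<in>UNIV. \<Sum>r\<in>UNIV. hd H a q r * p q x * p r y)) \<and>
     (\<forall>a. (\<Sum>c\<in>UNIV. p a c * he K c) = he H a) \<and>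
     (\<forall>a z. (\<Sum>c\<in>UNIV. hS H a c * p c z) = (\<Sum>b\<in>UNIV. p a b * hS K b z))"

definition lin_map :: "('a::finite \<Rightarrow> 'b \<Rightarrow> 'k::field) \<Rightarrow> ('a \<Rightarrow> 'k) \<Rightarrow> ('b \<Rightarrow> 'k)" where
  "lin_map p x = (\<lambda>b. \<Sum>a\<in>UNIV. x a * p a b)"

definition hmul :: "('a::finite, 'k::field) hopf_sc \<Rightarrow> ('a \<Rightarrow> 'k) \<Rightarrow> ('a \<Rightarrow> 'k) \<Rightarrow> ('a \<Rightarrow> 'k)" where
  "hmul H x y = (\<lambda>c. \<Sum>a\<in>UNIV. \<Sum>b\<in>UNIV. x a * y b * hm H a b c)"

text \<open>A finite-dimensional left module of dimension n: rho a is the n x n matrix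
(entries rho a p q, p q < n) by which the basis vector e_a acts.\<close>

definition is_rep :: "('a::finite, 'k::field) hopf_sc \<Rightarrow> nat \<Rightarrow> ('a \<Rightarrow> nat \<Rightarrow> nat \<Rightarrow> 'k) \<Rightarrow> bool" where
  "is_rep H n rho \<longleftrightarrow>
     (\<forall>a b p q. p < n \<longrightarrow> q < n \<longrightarrow>
        (\<Sum>c\<in>UNIV. hm H a b c * rho c p q) = (\<Sum>r<n. rho a p r * rho b r q)) \<and>
     (\<forall>p q. p < n \<longrightarrow> q < n \<longrightarrow> (\<Sum>a\<in>UNIV. hu H a * rho a p q) = kdelta p q)"

definition act :: "('a::finite \<Rightarrow> nat \<Rightarrow> nat \<Rightarrow> 'k::field) \<Rightarrow> ('a \<Rightarrow> 'k) \<Rightarrow> nat \<Rightarrow> nat \<Rightarrow> 'k" where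
  "act rho x p q = (\<Sum>a\<in>UNIV. x a * rho a p q)"

definition pullback_rep :: "('b::finite, 'k::field) hopf_sc \<Rightarrow> ('a::finite \<Rightarrow> 'b \<Rightarrow> 'k) \<Rightarrow> nat \<Rightarrow> ('a \<Rightarrow> nat \<Rightarrow> nat \<Rightarrow> 'k) \<Rightarrow> bool" where
  "pullback_rep K p n rho \<longleftrightarrow>
     (\<exists>sigma. is_rep K n sigma \<and>
        (\<forall>a q r. q < n \<longrightarrow> r < n \<longrightarrow> rho a q r = (\<Sum>b\<in>UNIV. p a b * sigma b q r)))"

text \<open>L = { ((f o pi) (x) id)(R_21 R) | f in K^* }, L^+ = L \<inter> ker eps, and H L^+.\<close>

definition Lset :: "('a::finite, 'k::field) hopf_sc \<Rightarrow> ('a \<Rightarrow> 'a \<Rightarrow> 'k) \<Rightarrow> ('a \<Rightarrow> 'b::finite \<Rightarrow> 'k) \<Rightarrow> ('a \<Rightarrow> 'k) set" where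
  "Lset H R p = {x. \<exists>f :: 'b \<Rightarrow> 'k.
      x = (\<lambda>v. \<Sum>u\<in>UNIV. (\<Sum>b\<in>UNIV. p u b * f b) * t2mul H (\<lambda>(x, y). R y x) (\<lambda>(x, y). R x y) (u, v))}"

definition Lplus :: "('a::finite, 'k::field) hopf_sc \<Rightarrow> ('a \<Rightarrow> 'a \<Rightarrow> 'k) \<Rightarrow> ('a \<Rightarrow> 'b::finite \<Rightarrow> 'k) \<Rightarrow> ('a \<Rightarrow> 'k) set" where
  "Lplus H R p = {x \<in> Lset H R p. (\<Sum>a\<in>UNIV. x a * he H a) = 0}"

definition HLplus :: "('a::finite, 'k::field) hopf_sc \<Rightarrow> ('a \<Rightarrow> 'a \<Rightarrow> 'k) \<Rightarrow> ('a \<Rightarrow> 'b::finite \<Rightarrow> 'k) \<Rightarrow> ('a \<Rightarrow> 'k) set" where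
  "HLplus H R p = {z. \<exists>(N::nat) h l. (\<forall>i<N. l i \<in> Lplus H R p) \<and> z = (\<lambda>c. \<Sum>i<N. hmul H (h i) (l i) c)}"

text \<open>An H-module lies in Rep_f(K') (K' = H / H L^+, pulled back along the quotient
map pi') iff its action factors through pi', i.e. H L^+ = ker pi' acts by zero.\<close>

definition in_quotient_rep :: "('a::finite, 'k::field) hopf_sc \<Rightarrow> ('a \<Rightarrow> 'a \<Rightarrow> 'k) \<Rightarrow> ('a \<Rightarrow> 'b::finite \<Rightarrow> 'k) \<Rightarrow> nat \<Rightarrow> ('a \<Rightarrow> nat \<Rightarrow> nat \<Rightarrow> 'k) \<Rightarrow> bool" where
  "in_quotient_rep H R p n rho \<longleftrightarrow>
     (\<forall>z \<in> HLplus H R p. \<forall>q r. q < n \<longrightarrow> r < n \<longrightarrow> act rho z q r = 0)"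

text \<open>Braiding c_{X,Y}(x (x) y) = sum_i R^i y (x) R_i x, X = (n, rhoX), Y = (m, rhoY);
vectors of X (x) Y are functions on index pairs (p, q), p < n, q < m.\<close>

definition braid :: "('a::finite \<Rightarrow> 'a \<Rightarrow> 'k::field) \<Rightarrow> nat \<Rightarrow> ('a \<Rightarrow> nat \<Rightarrow> nat \<Rightarrow> 'k) \<Rightarrow> nat \<Rightarrow> ('a \<Rightarrow> nat \<Rightarrow> nat \<Rightarrow> 'k)
    \<Rightarrow> (nat \<times> nat \<Rightarrow> 'k) \<Rightarrow> (nat \<times> nat \<Rightarrow> 'k)" where
  "braid R n rhoX m rhoY v = (\<lambda>(q, p). if q < m \<and> p < n then
      (\<Sum>a\<in>UNIV. \<Sum>b\<in>UNIV. R a b * (\<Sum>q'<m. \<Sum>p'<n. rhoY b q q' * rhoX a p p' * v (p', q'))) else 0)"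

definition in_tensor :: "nat \<Rightarrow> nat \<Rightarrow> (nat \<times> nat \<Rightarrow> 'k::zero) \<Rightarrow> bool" where
  "in_tensor n m v \<longleftrightarrow> (\<forall>p q. v (p, q) \<noteq> 0 \<longrightarrow> p < n \<and> q < m)"

end

theory Submission
  imports Defs
begin

text \<open>Let Q = R21 R. The double braiding c(Y,X) c(X,Y) on X \<otimes> Y is the action of Q.
  If X is pulled back from a K-module, only (\<pi> \<otimes> id)(Q) enters, so the double braiding is
  trivial as soon as every element l = ((f \<circ> \<pi>) \<otimes> id)(Q) of L acts on Y by the scalar \<epsilon>(l);
  conversely, testing on the regular representation of K recovers this condition from the
  triviality of the double braiding. Finally, L acting through \<epsilon> means that L+, and hence the
  ideal H L+, annihilates Y, i.e. Y is a K'-module. The computation of \<epsilon>(l) rests on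
  (\<epsilon> \<otimes> id)(R) = (id \<otimes> \<epsilon>)(R) = 1.\<close>

lemma kdelta_mult [simp]:
  "kdelta a b * c = (if a = b then c else (0::'k::field))"
  "c * kdelta a b = (if a = b then c else 0)"
  by (simp_all add: kdelta_def)

lemma if_zero_mult [simp]:
  "(if P then a else 0) * c = (if P then a * c else (0::'k::semiring_0))"
  "c * (if P then a else 0) = (if P then c * a else 0)"
  by simp_all

lemma sum_rotate3:
  "(\<Sum>a\<in>A. \<Sum>b\<in>B. \<Sum>c\<in>C. F a b c) = (\<Sum>c\<in>C. \<Sum>a\<in>A. \<Sum>b\<in>B. F a b c)"
  by (simp add: sum.swap[of _ B C] sum.swap[of _ A C])

lemma is_hopfD:
  assumes "is_hopf H"
  shows hm_assoc: "\<And>a b c z. (\<Sum>w\<in>UNIV. hm H a b w * hm H w c z) = (\<Sum>w\<in>UNIV. hm H b c w * hm H a w z)"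
    and hm_unit_left: "\<And>a z. (\<Sum>w\<in>UNIV. hu H w * hm H w a z) = kdelta a z"
    and hm_unit_right: "\<And>a z. (\<Sum>w\<in>UNIV. hu H w * hm H a w z) = kdelta a z"
    and hd_counit_right: "\<And>a x. (\<Sum>w\<in>UNIV. he H w * hd H a x w) = kdelta a x"
    and he_hm: "\<And>a b. (\<Sum>w\<in>UNIV. hm H a b w * he H w) = he H a * he H b"
    and he_hu: "(\<Sum>w\<in>UNIV. hu H w * he H w) = 1"
  using assms unfolding is_hopf_def by auto

lemma hmul_assoc:
  assumes "is_hopf H"
  shows "hmul H (hmul H x y) z = hmul H x (hmul H y z)"
proof
  fix c
  have "hmul H (hmul H x y) z c =
      (\<Sum>w\<in>UNIV. \<Sum>c'\<in>UNIV. \<Sum>a\<in>UNIV. \<Sum>b\<in>UNIV. x a * y b * z c' * (hm H a b w * hm H w c' c))"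
    by (simp add: hmul_def sum_distrib_left sum_distrib_right ac_simps)
  also have "\<dots> = (\<Sum>a\<in>UNIV. \<Sum>b\<in>UNIV. \<Sum>c'\<in>UNIV. \<Sum>w\<in>UNIV. x a * y b * z c' * (hm H a b w * hm H w c' c))"
    by (simp only: sum.cartesian_product)
       (rule sum.reindex_bij_witness[where i="\<lambda>(a,b,c',w). (w,c',a,b)" and j="\<lambda>(w,c',a,b). (a,b,c',w)"], auto)
  also have "\<dots> = (\<Sum>a\<in>UNIV. \<Sum>b\<in>UNIV. \<Sum>c'\<in>UNIV. \<Sum>w\<in>UNIV. x a * y b * z c' * (hm H b c' w * hm H a w c))"
    by (simp only: sum_distrib_left[symmetric] hm_assoc[OF assms])
  also have "\<dots> = (\<Sum>a\<in>UNIV. \<Sum>w\<in>UNIV. \<Sum>b\<in>UNIV. \<Sum>c'\<in>UNIV. x a * y b * z c' * (hm H b c' w * hm H a w c))"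
    by (simp only: sum.cartesian_product)
       (rule sum.reindex_bij_witness[where i="\<lambda>(a,w,b,c'). (a,b,c',w)" and j="\<lambda>(a,b,c',w). (a,w,b,c')"], auto)
  also have "\<dots> = hmul H x (hmul H y z) c"
    by (simp add: hmul_def sum_distrib_left sum_distrib_right ac_simps)
  finally show "hmul H (hmul H x y) z c = hmul H x (hmul H y z) c" .
qed

lemma hmul_unit_left:
  assumes "is_hopf H"
  shows "hmul H (hu H) x = x"
proof
  fix c
  have "hmul H (hu H) x c = (\<Sum>b\<in>UNIV. x b * (\<Sum>a\<in>UNIV. hu H a * hm H a b c))"
    unfolding hmul_def by (subst sum.swap) (simp add: sum_distrib_left ac_simps)
  then show "hmul H (hu H) x c = x c" by (simp add: hm_unit_left[OF assms])
qed

lemma hmul_unit_right: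
  assumes "is_hopf H"
  shows "hmul H x (hu H) = x"
proof
  fix c
  have "hmul H x (hu H) c = (\<Sum>a\<in>UNIV. x a * (\<Sum>b\<in>UNIV. hu H b * hm H a b c))"
    by (simp add: hmul_def sum_distrib_left ac_simps)
  then show "hmul H x (hu H) c = x c" by (simp add: hm_unit_right[OF assms])
qed

section \<open>Partial counits and the counit of R\<close>

definition eps_left :: "('a::finite, 'k::field) hopf_sc \<Rightarrow> ('a \<times> 'a \<Rightarrow> 'k) \<Rightarrow> 'a \<Rightarrow> 'k" where
  "eps_left H t = (\<lambda>y. \<Sum>x\<in>UNIV. he H x * t (x, y))"

definition eps_right :: "('a::finite, 'k::field) hopf_sc \<Rightarrow> ('a \<times> 'a \<Rightarrow> 'k) \<Rightarrow> 'a \<Rightarrow> 'k" where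
  "eps_right H t = (\<lambda>x. \<Sum>y\<in>UNIV. t (x, y) * he H y)"

definition eps_eps_id :: "('a::finite, 'k::field) hopf_sc \<Rightarrow> ('a \<times> 'a \<times> 'a \<Rightarrow> 'k) \<Rightarrow> 'a \<Rightarrow> 'k" where
  "eps_eps_id H t = (\<lambda>z. \<Sum>x\<in>UNIV. \<Sum>y\<in>UNIV. he H x * he H y * t (x, y, z))"

definition id_eps_eps :: "('a::finite, 'k::field) hopf_sc \<Rightarrow> ('a \<times> 'a \<times> 'a \<Rightarrow> 'k) \<Rightarrow> 'a \<Rightarrow> 'k" where
  "id_eps_eps H t = (\<lambda>x. \<Sum>y\<in>UNIV. \<Sum>z\<in>UNIV. t (x, y, z) * he H y * he H z)"

lemma eps_left_t2mul:
  assumes "is_hopf H"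
  shows "eps_left H (t2mul H t s) = hmul H (eps_left H t) (eps_left H s)"
proof
  fix y
  have "eps_left H (t2mul H t s) y = (\<Sum>x\<in>UNIV. \<Sum>a1\<in>UNIV. \<Sum>a2\<in>UNIV. \<Sum>b1\<in>UNIV. \<Sum>b2\<in>UNIV.
      he H x * (t (a1, a2) * s (b1, b2) * hm H a1 b1 x * hm H a2 b2 y))"
    by (simp add: eps_left_def t2mul_def sum_distrib_left)
  also have "\<dots> = (\<Sum>a2\<in>UNIV. \<Sum>b2\<in>UNIV. \<Sum>a1\<in>UNIV. \<Sum>b1\<in>UNIV. \<Sum>x\<in>UNIV.
      he H x * (t (a1, a2) * s (b1, b2) * hm H a1 b1 x * hm H a2 b2 y))"
    by (simp only: sum.cartesian_product)
       (rule sum.reindex_bij_witness[where i="\<lambda>(a2,b2,a1,b1,x). (x,a1,a2,b1,b2)"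
          and j="\<lambda>(x,a1,a2,b1,b2). (a2,b2,a1,b1,x)"], auto)
  also have "\<dots> = (\<Sum>a2\<in>UNIV. \<Sum>b2\<in>UNIV. \<Sum>a1\<in>UNIV. \<Sum>b1\<in>UNIV.
      t (a1, a2) * s (b1, b2) * hm H a2 b2 y * (\<Sum>x\<in>UNIV. hm H a1 b1 x * he H x))"
    by (simp add: sum_distrib_left ac_simps)
  also have "\<dots> = hmul H (eps_left H t) (eps_left H s) y"
    by (simp only: he_hm[OF assms]) (simp add: hmul_def eps_left_def sum_distrib_left sum_distrib_right ac_simps)
  finally show "eps_left H (t2mul H t s) y = hmul H (eps_left H t) (eps_left H s) y" .
qed

lemma eps_right_t2mul:
  assumes "is_hopf H"
  shows "eps_right H (t2mul H t s) = hmul H (eps_right H t) (eps_right H s)"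
proof
  fix x
  have "eps_right H (t2mul H t s) x = (\<Sum>y\<in>UNIV. \<Sum>a1\<in>UNIV. \<Sum>a2\<in>UNIV. \<Sum>b1\<in>UNIV. \<Sum>b2\<in>UNIV.
      he H y * (t (a1, a2) * s (b1, b2) * hm H a1 b1 x * hm H a2 b2 y))"
    by (simp add: eps_right_def t2mul_def sum_distrib_left sum_distrib_right ac_simps)
  also have "\<dots> = (\<Sum>a1\<in>UNIV. \<Sum>b1\<in>UNIV. \<Sum>a2\<in>UNIV. \<Sum>b2\<in>UNIV. \<Sum>y\<in>UNIV.
      he H y * (t (a1, a2) * s (b1, b2) * hm H a1 b1 x * hm H a2 b2 y))"
    by (simp only: sum.cartesian_product)
       (rule sum.reindex_bij_witness[where i="\<lambda>(a1,b1,a2,b2,y). (y,a1,a2,b1,b2)"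
          and j="\<lambda>(y,a1,a2,b1,b2). (a1,b1,a2,b2,y)"], auto)
  also have "\<dots> = (\<Sum>a1\<in>UNIV. \<Sum>b1\<in>UNIV. \<Sum>a2\<in>UNIV. \<Sum>b2\<in>UNIV.
      t (a1, a2) * s (b1, b2) * hm H a1 b1 x * (\<Sum>y\<in>UNIV. hm H a2 b2 y * he H y))"
    by (simp add: sum_distrib_left ac_simps)
  also have "\<dots> = hmul H (eps_right H t) (eps_right H s) x"
    by (simp only: he_hm[OF assms]) (simp add: hmul_def eps_right_def sum_distrib_left sum_distrib_right ac_simps)
  finally show "eps_right H (t2mul H t s) x = hmul H (eps_right H t) (eps_right H s) x" .
qed

lemma eps_eps_id_t3mul:
  assumes "is_hopf H"
  shows "eps_eps_id H (t3mul H t s) = hmul H (eps_eps_id H t) (eps_eps_id H s)"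
proof
  fix z
  have "eps_eps_id H (t3mul H t s) z =
      (\<Sum>x\<in>UNIV. \<Sum>y\<in>UNIV. \<Sum>a1\<in>UNIV. \<Sum>a2\<in>UNIV. \<Sum>a3\<in>UNIV. \<Sum>b1\<in>UNIV. \<Sum>b2\<in>UNIV. \<Sum>b3\<in>UNIV.
        he H x * he H y * (t (a1, a2, a3) * s (b1, b2, b3) * hm H a1 b1 x * hm H a2 b2 y * hm H a3 b3 z))"
    by (simp add: eps_eps_id_def t3mul_def sum_distrib_left)
  also have "\<dots> =
      (\<Sum>a3\<in>UNIV. \<Sum>b3\<in>UNIV. \<Sum>a1\<in>UNIV. \<Sum>b1\<in>UNIV. \<Sum>b2\<in>UNIV. \<Sum>a2\<in>UNIV. \<Sum>x\<in>UNIV. \<Sum>y\<in>UNIV.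
        he H x * he H y * (t (a1, a2, a3) * s (b1, b2, b3) * hm H a1 b1 x * hm H a2 b2 y * hm H a3 b3 z))"
    by (simp only: sum.cartesian_product)
       (rule sum.reindex_bij_witness[where i="\<lambda>(a3,b3,a1,b1,b2,a2,x,y). (x,y,a1,a2,a3,b1,b2,b3)"
          and j="\<lambda>(x,y,a1,a2,a3,b1,b2,b3). (a3,b3,a1,b1,b2,a2,x,y)"], auto)
  also have "\<dots> =
      (\<Sum>a3\<in>UNIV. \<Sum>b3\<in>UNIV. \<Sum>a1\<in>UNIV. \<Sum>b1\<in>UNIV. \<Sum>b2\<in>UNIV. \<Sum>a2\<in>UNIV.
        t (a1, a2, a3) * s (b1, b2, b3) * hm H a3 b3 z *
          (\<Sum>x\<in>UNIV. hm H a1 b1 x * he H x * (\<Sum>y\<in>UNIV. hm H a2 b2 y * he H y)))"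
    by (simp add: sum_distrib_left sum_distrib_right ac_simps)
  also have "\<dots> = hmul H (eps_eps_id H t) (eps_eps_id H s) z"
    by (simp only: he_hm[OF assms] sum_distrib_right[symmetric])
       (simp add: hmul_def eps_eps_id_def sum_distrib_left sum_distrib_right ac_simps)
  finally show "eps_eps_id H (t3mul H t s) z = hmul H (eps_eps_id H t) (eps_eps_id H s) z" .
qed

lemma id_eps_eps_t3mul:
  assumes "is_hopf H"
  shows "id_eps_eps H (t3mul H t s) = hmul H (id_eps_eps H t) (id_eps_eps H s)"
proof
  fix x
  have "id_eps_eps H (t3mul H t s) x =
      (\<Sum>y\<in>UNIV. \<Sum>z\<in>UNIV. \<Sum>a1\<in>UNIV. \<Sum>a2\<in>UNIV. \<Sum>a3\<in>UNIV. \<Sum>b1\<in>UNIV. \<Sum>b2\<in>UNIV. \<Sum>b3\<in>UNIV.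
        he H y * he H z * (t (a1, a2, a3) * s (b1, b2, b3) * hm H a1 b1 x * hm H a2 b2 y * hm H a3 b3 z))"
    by (simp add: id_eps_eps_def t3mul_def sum_distrib_left sum_distrib_right ac_simps)
  also have "\<dots> =
      (\<Sum>a1\<in>UNIV. \<Sum>b1\<in>UNIV. \<Sum>a2\<in>UNIV. \<Sum>b2\<in>UNIV. \<Sum>b3\<in>UNIV. \<Sum>a3\<in>UNIV. \<Sum>y\<in>UNIV. \<Sum>z\<in>UNIV.
        he H y * he H z * (t (a1, a2, a3) * s (b1, b2, b3) * hm H a1 b1 x * hm H a2 b2 y * hm H a3 b3 z))"
    by (simp only: sum.cartesian_product)
       (rule sum.reindex_bij_witness[where i="\<lambda>(a1,b1,a2,b2,b3,a3,y,z). (y,z,a1,a2,a3,b1,b2,b3)"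
          and j="\<lambda>(y,z,a1,a2,a3,b1,b2,b3). (a1,b1,a2,b2,b3,a3,y,z)"], auto)
  also have "\<dots> =
      (\<Sum>a1\<in>UNIV. \<Sum>b1\<in>UNIV. \<Sum>a2\<in>UNIV. \<Sum>b2\<in>UNIV. \<Sum>b3\<in>UNIV. \<Sum>a3\<in>UNIV.
        t (a1, a2, a3) * s (b1, b2, b3) * hm H a1 b1 x *
          (\<Sum>y\<in>UNIV. hm H a2 b2 y * he H y * (\<Sum>z\<in>UNIV. hm H a3 b3 z * he H z)))"
    by (simp add: sum_distrib_left sum_distrib_right ac_simps)
  also have "\<dots> = hmul H (id_eps_eps H t) (id_eps_eps H s) x"
    by (simp only: he_hm[OF assms] sum_distrib_right[symmetric])
       (simp add: hmul_def id_eps_eps_def sum_distrib_left sum_distrib_right ac_simps)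
  finally show "id_eps_eps H (t3mul H t s) x = hmul H (id_eps_eps H t) (id_eps_eps H s) x" .
qed

lemma eps_left_unit_tensor_unit:
  assumes "is_hopf H"
  shows "eps_left H (\<lambda>(x, y). hu H x * hu H y) = hu H"
proof
  fix y
  have "eps_left H (\<lambda>(x, y). hu H x * hu H y) y = (\<Sum>x\<in>UNIV. hu H x * he H x) * hu H y"
    by (simp add: eps_left_def sum_distrib_left sum_distrib_right ac_simps)
  then show "eps_left H (\<lambda>(x, y). hu H x * hu H y) y = hu H y" by (simp add: he_hu[OF assms])
qed

lemma eps_right_unit_tensor_unit:
  assumes "is_hopf H"
  shows "eps_right H (\<lambda>(x, y). hu H x * hu H y) = hu H"
proof
  fix x
  have "eps_right H (\<lambda>(x, y). hu H x * hu H y) x = hu H x * (\<Sum>y\<in>UNIV. hu H y * he H y)"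
    by (simp add: eps_right_def sum_distrib_left ac_simps)
  then show "eps_right H (\<lambda>(x, y). hu H x * hu H y) x = hu H x" by (simp add: he_hu[OF assms])
qed

lemma eps_eps_coproduct:
  assumes "is_hopf H"
  shows "(\<Sum>x\<in>UNIV. \<Sum>y\<in>UNIV. he H x * he H y * hd H a x y) = he H a"
  by (simp add: mult.assoc sum_distrib_left[symmetric] hd_counit_right[OF assms])

lemma eps_eps_id_coproduct_left:
  assumes "is_hopf H"
  shows "eps_eps_id H (\<lambda>(x, y, z). \<Sum>a\<in>UNIV. T a z * hd H a x y) = eps_left H (\<lambda>(a, z). T a z)"
proof
  fix z
  have "eps_eps_id H (\<lambda>(x, y, z). \<Sum>a\<in>UNIV. T a z * hd H a x y) z =
      (\<Sum>x\<in>UNIV. \<Sum>y\<in>UNIV. \<Sum>a\<in>UNIV. T a z * (he H x * he H y * hd H a x y))"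
    by (simp add: eps_eps_id_def sum_distrib_left ac_simps)
  also have "\<dots> = (\<Sum>a\<in>UNIV. T a z * (\<Sum>x\<in>UNIV. \<Sum>y\<in>UNIV. he H x * he H y * hd H a x y))"
    by (subst sum_rotate3) (simp only: sum_distrib_left)
  finally show "eps_eps_id H (\<lambda>(x, y, z). \<Sum>a\<in>UNIV. T a z * hd H a x y) z = eps_left H (\<lambda>(a, z). T a z) z"
    by (simp only: eps_eps_coproduct[OF assms]) (simp add: eps_left_def mult.commute)
qed

lemma id_eps_eps_coproduct_right:
  assumes "is_hopf H"
  shows "id_eps_eps H (\<lambda>(x, y, z). \<Sum>b\<in>UNIV. T x b * hd H b y z) = eps_right H (\<lambda>(x, b). T x b)"
proof
  fix x
  have "id_eps_eps H (\<lambda>(x, y, z). \<Sum>b\<in>UNIV. T x b * hd H b y z) x =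
      (\<Sum>y\<in>UNIV. \<Sum>z\<in>UNIV. \<Sum>b\<in>UNIV. T x b * (he H y * he H z * hd H b y z))"
    by (simp add: id_eps_eps_def sum_distrib_left sum_distrib_right ac_simps)
  also have "\<dots> = (\<Sum>b\<in>UNIV. T x b * (\<Sum>y\<in>UNIV. \<Sum>z\<in>UNIV. he H y * he H z * hd H b y z))"
    by (subst sum_rotate3) (simp only: sum_distrib_left)
  finally show "id_eps_eps H (\<lambda>(x, y, z). \<Sum>b\<in>UNIV. T x b * hd H b y z) x = eps_right H (\<lambda>(x, b). T x b) x"
    by (simp only: eps_eps_coproduct[OF assms]) (simp add: eps_right_def)
qed

lemma eps_eps_id_unit_factor:
  assumes "is_hopf H"
  shows "eps_eps_id H (\<lambda>(x, y, z). T x z * hu H y) = eps_left H (\<lambda>(x, z). T x z)"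
    and "eps_eps_id H (\<lambda>(x, y, z). hu H x * T y z) = eps_left H (\<lambda>(y, z). T y z)"
proof -
  have "eps_eps_id H (\<lambda>(x, y, z). T x z * hu H y) z =
      (\<Sum>x\<in>UNIV. he H x * T x z * (\<Sum>y\<in>UNIV. hu H y * he H y))" for z
    by (simp add: eps_eps_id_def sum_distrib_left ac_simps)
  then show "eps_eps_id H (\<lambda>(x, y, z). T x z * hu H y) = eps_left H (\<lambda>(x, z). T x z)"
    by (intro ext) (simp add: he_hu[OF assms] sum_distrib_left[symmetric] eps_left_def)
  have "eps_eps_id H (\<lambda>(x, y, z). hu H x * T y z) z =
      (\<Sum>x\<in>UNIV. hu H x * he H x * (\<Sum>y\<in>UNIV. he H y * T y z))" for z
    by (simp add: eps_eps_id_def sum_distrib_left ac_simps)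
  then show "eps_eps_id H (\<lambda>(x, y, z). hu H x * T y z) = eps_left H (\<lambda>(y, z). T y z)"
    by (intro ext) (simp add: he_hu[OF assms] sum_distrib_right[symmetric] eps_left_def)
qed

lemma id_eps_eps_unit_factor:
  assumes "is_hopf H"
  shows "id_eps_eps H (\<lambda>(x, y, z). T x z * hu H y) = eps_right H (\<lambda>(x, z). T x z)"
    and "id_eps_eps H (\<lambda>(x, y, z). T x y * hu H z) = eps_right H (\<lambda>(x, y). T x y)"
proof -
  have "id_eps_eps H (\<lambda>(x, y, z). T x z * hu H y) x =
      (\<Sum>y\<in>UNIV. hu H y * he H y * (\<Sum>z\<in>UNIV. T x z * he H z))" for x
    by (simp add: id_eps_eps_def sum_distrib_left sum_distrib_right ac_simps)
  then show "id_eps_eps H (\<lambda>(x, y, z). T x z * hu H y) = eps_right H (\<lambda>(x, z). T x z)"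
    by (intro ext) (simp add: he_hu[OF assms] sum_distrib_left[symmetric] sum_distrib_right[symmetric] eps_right_def)
  have "id_eps_eps H (\<lambda>(x, y, z). T x y * hu H z) x =
      (\<Sum>y\<in>UNIV. T x y * he H y * (\<Sum>z\<in>UNIV. hu H z * he H z))" for x
    by (simp add: id_eps_eps_def sum_distrib_left sum_distrib_right ac_simps)
  then show "id_eps_eps H (\<lambda>(x, y, z). T x y * hu H z) = eps_right H (\<lambda>(x, y). T x y)"
    by (intro ext) (simp add: he_hu[OF assms] sum_distrib_left[symmetric] sum_distrib_right[symmetric] eps_right_def)
qed

lemma idempotent_right_invertible_eq_unit:
  assumes H: "is_hopf H" and "hmul H e e = e" and "hmul H e g = hu H"
  shows "e = hu H"
proof -
  have "e = hmul H e (hmul H e g)" using assms hmul_unit_right[OF H] by simp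
  also have "\<dots> = hu H" using assms hmul_assoc[OF H] by metis
  finally show ?thesis .
qed

lemma quasitriangularD:
  assumes "is_quasitriangular H R"
  shows R_right_invertible: "\<exists>Rinv. t2mul H (\<lambda>(x, y). R x y) Rinv = (\<lambda>(x, y). hu H x * hu H y)"
    and coproduct_left_R: "(\<lambda>(x, y, z). \<Sum>a\<in>UNIV. R a z * hd H a x y) =
         t3mul H (\<lambda>(x, y, z). R x z * hu H y) (\<lambda>(x, y, z). hu H x * R y z)"
    and coproduct_right_R: "(\<lambda>(x, y, z). \<Sum>b\<in>UNIV. R x b * hd H b y z) =
         t3mul H (\<lambda>(x, y, z). R x z * hu H y) (\<lambda>(x, y, z). R x y * hu H z)"
  using assms unfolding is_quasitriangular_def Let_def by blast+

text \<open>Applying \<epsilon> \<otimes> \<epsilon> \<otimes> id to (\<Delta> \<otimes> id)(R) = R13 R23 shows that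
  (\<epsilon> \<otimes> id)(R) is idempotent, and it is right invertible because R is; symmetrically for id \<otimes> \<epsilon>.\<close>

lemma R_partial_counits_eq_unit:
  assumes H: "is_hopf H" and Q: "is_quasitriangular H R"
  shows "eps_left H (\<lambda>(x, y). R x y) = hu H" and "eps_right H (\<lambda>(x, y). R x y) = hu H"
proof -
  obtain Rinv where Rinv: "t2mul H (\<lambda>(x, y). R x y) Rinv = (\<lambda>(x, y). hu H x * hu H y)"
    using R_right_invertible[OF Q] by blast
  have "eps_left H (\<lambda>(x, y). R x y) =
      eps_eps_id H (t3mul H (\<lambda>(x, y, z). R x z * hu H y) (\<lambda>(x, y, z). hu H x * R y z))"
    by (simp only: coproduct_left_R[OF Q, symmetric] eps_eps_id_coproduct_left[OF H])
  also have "\<dots> = hmul H (eps_left H (\<lambda>(x, y). R x y)) (eps_left H (\<lambda>(x, y). R x y))"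
    by (simp only: eps_eps_id_t3mul[OF H] eps_eps_id_unit_factor[OF H])
  finally have "hmul H (eps_left H (\<lambda>(x, y). R x y)) (eps_left H (\<lambda>(x, y). R x y)) = eps_left H (\<lambda>(x, y). R x y)" ..
  moreover have "hmul H (eps_left H (\<lambda>(x, y). R x y)) (eps_left H Rinv) = hu H"
    by (simp only: eps_left_t2mul[OF H, symmetric] Rinv eps_left_unit_tensor_unit[OF H])
  ultimately show "eps_left H (\<lambda>(x, y). R x y) = hu H"
    by (rule idempotent_right_invertible_eq_unit[OF H])
  have "eps_right H (\<lambda>(x, y). R x y) =
      id_eps_eps H (t3mul H (\<lambda>(x, y, z). R x z * hu H y) (\<lambda>(x, y, z). R x y * hu H z))"
    by (simp only: coproduct_right_R[OF Q, symmetric] id_eps_eps_coproduct_right[OF H])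
  also have "\<dots> = hmul H (eps_right H (\<lambda>(x, y). R x y)) (eps_right H (\<lambda>(x, y). R x y))"
    by (simp only: id_eps_eps_t3mul[OF H] id_eps_eps_unit_factor[OF H])
  finally have "hmul H (eps_right H (\<lambda>(x, y). R x y)) (eps_right H (\<lambda>(x, y). R x y)) = eps_right H (\<lambda>(x, y). R x y)" ..
  moreover have "hmul H (eps_right H (\<lambda>(x, y). R x y)) (eps_right H Rinv) = hu H"
    by (simp only: eps_right_t2mul[OF H, symmetric] Rinv eps_right_unit_tensor_unit[OF H])
  ultimately show "eps_right H (\<lambda>(x, y). R x y) = hu H"
    by (rule idempotent_right_invertible_eq_unit[OF H])
qed

section \<open>The monodromy R21 R and the subalgebra L\<close>

definition monodromy :: "('a::finite, 'k::field) hopf_sc \<Rightarrow> ('a \<Rightarrow> 'a \<Rightarrow> 'k) \<Rightarrow> 'a \<times> 'a \<Rightarrow> 'k" where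
  "monodromy H R = t2mul H (\<lambda>(x, y). R y x) (\<lambda>(x, y). R x y)"

lemma monodromy_partial_counits_eq_unit:
  assumes H: "is_hopf H" and Q: "is_quasitriangular H R"
  shows "eps_left H (monodromy H R) = hu H" and "eps_right H (monodromy H R) = hu H"
proof -
  have swap: "eps_left H (\<lambda>(x, y). R y x) = eps_right H (\<lambda>(x, y). R x y)"
    "eps_right H (\<lambda>(x, y). R y x) = eps_left H (\<lambda>(x, y). R x y)"
    by (simp_all add: eps_left_def eps_right_def mult.commute)
  show "eps_left H (monodromy H R) = hu H" and "eps_right H (monodromy H R) = hu H"
    by (simp_all add: monodromy_def eps_left_t2mul[OF H] eps_right_t2mul[OF H] swap
        R_partial_counits_eq_unit[OF H Q] hmul_unit_left[OF H])
qed

lemma monodromy_expand: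
  "monodromy H R (u, v) = (\<Sum>a1\<in>UNIV. \<Sum>a2\<in>UNIV. \<Sum>b1\<in>UNIV. \<Sum>b2\<in>UNIV.
      R a2 a1 * R b1 b2 * hm H a1 b1 u * hm H a2 b2 v)"
  by (simp add: monodromy_def t2mul_def)

text \<open>Lgen b is ((f_b \<circ> \<pi>) \<otimes> id)(R21 R) for the dual basis functional f_b of K,
  so L is spanned by the Lgen b.\<close>

definition Lgen :: "('a::finite, 'k::field) hopf_sc \<Rightarrow> ('a \<Rightarrow> 'a \<Rightarrow> 'k) \<Rightarrow> ('a \<Rightarrow> 'b::finite \<Rightarrow> 'k) \<Rightarrow> 'b \<Rightarrow> 'a \<Rightarrow> 'k" where
  "Lgen H R p b = (\<lambda>v. \<Sum>u\<in>UNIV. p u b * monodromy H R (u, v))"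

lemma Lset_eq_span_Lgen: "Lset H R p = {x. \<exists>f. x = (\<lambda>v. \<Sum>b\<in>UNIV. f b * Lgen H R p b v)}"
proof -
  have eq: "(\<Sum>u\<in>UNIV. (\<Sum>b\<in>UNIV. p u b * f b) * monodromy H R (u, v)) = (\<Sum>b\<in>UNIV. f b * Lgen H R p b v)"
    for f v
  proof -
    have "(\<Sum>u\<in>UNIV. (\<Sum>b\<in>UNIV. p u b * f b) * monodromy H R (u, v)) =
        (\<Sum>u\<in>UNIV. \<Sum>b\<in>UNIV. f b * (p u b * monodromy H R (u, v)))"
      by (simp add: sum_distrib_left sum_distrib_right ac_simps)
    also have "\<dots> = (\<Sum>b\<in>UNIV. f b * Lgen H R p b v)"
      by (subst sum.swap) (simp add: Lgen_def sum_distrib_left)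
    finally show ?thesis .
  qed
  show ?thesis unfolding Lset_def using eq by (simp add: monodromy_def)
qed

lemma hopf_mapD:
  assumes "is_hopf_map H K p"
  shows hopf_map_mult: "\<And>a a' z. (\<Sum>c\<in>UNIV. hm H a a' c * p c z) = (\<Sum>b\<in>UNIV. \<Sum>b'\<in>UNIV. p a b * p a' b' * hm K b b' z)"
    and hopf_map_unit: "\<And>z. (\<Sum>a\<in>UNIV. hu H a * p a z) = hu K z"
    and hopf_map_counit: "\<And>a. (\<Sum>c\<in>UNIV. p a c * he K c) = he H a"
  using assms unfolding is_hopf_map_def by auto

lemma counit_Lgen:
  assumes H: "is_hopf H" and Q: "is_quasitriangular H R" and P: "is_hopf_map H K p"
  shows "(\<Sum>a\<in>UNIV. Lgen H R p b a * he H a) = hu K b"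
proof -
  have "(\<Sum>a\<in>UNIV. Lgen H R p b a * he H a) = (\<Sum>a\<in>UNIV. \<Sum>u\<in>UNIV. p u b * (monodromy H R (u, a) * he H a))"
    by (simp add: Lgen_def sum_distrib_left sum_distrib_right ac_simps)
  also have "\<dots> = (\<Sum>u\<in>UNIV. p u b * eps_right H (monodromy H R) u)"
    by (subst sum.swap) (simp add: eps_right_def sum_distrib_left)
  finally show ?thesis by (simp add: monodromy_partial_counits_eq_unit[OF H Q] hopf_map_unit[OF P] mult.commute)
qed

lemma sum_counit_Lgen:
  assumes H: "is_hopf H" and Q: "is_quasitriangular H R" and P: "is_hopf_map H K p"
  shows "(\<Sum>b\<in>UNIV. he K b * Lgen H R p b v) = hu H v"
proof -
  have "(\<Sum>b\<in>UNIV. he K b * Lgen H R p b v) = (\<Sum>b\<in>UNIV. \<Sum>u\<in>UNIV. p u b * he K b * monodromy H R (u, v))"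
    by (simp add: Lgen_def sum_distrib_left ac_simps)
  also have "\<dots> = (\<Sum>u\<in>UNIV. (\<Sum>b\<in>UNIV. p u b * he K b) * monodromy H R (u, v))"
    by (subst sum.swap) (simp add: sum_distrib_right)
  finally show ?thesis
    using fun_cong[OF monodromy_partial_counits_eq_unit(1)[OF H Q], of v]
    by (simp add: hopf_map_counit[OF P] eps_left_def)
qed

section \<open>Modules over the quotient K'\<close>

lemma is_repD:
  assumes "is_rep H n rho" "i < n" "j < n"
  shows rep_mult: "(\<Sum>r<n. rho a i r * rho b r j) = (\<Sum>c\<in>UNIV. hm H a b c * rho c i j)"
    and rep_unit: "(\<Sum>a\<in>UNIV. hu H a * rho a i j) = kdelta i j"
  using assms unfolding is_rep_def by auto

lemma act_hmul:
  assumes Y: "is_rep H m rho" and tq: "t < m" "q < m"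
  shows "act rho (hmul H x y) t q = (\<Sum>r<m. act rho x t r * act rho y r q)"
proof -
  have "act rho (hmul H x y) t q = (\<Sum>c\<in>UNIV. \<Sum>a\<in>UNIV. \<Sum>b\<in>UNIV. x a * y b * (hm H a b c * rho c t q))"
    by (simp add: act_def hmul_def sum_distrib_left sum_distrib_right ac_simps)
  also have "\<dots> = (\<Sum>a\<in>UNIV. \<Sum>b\<in>UNIV. x a * y b * (\<Sum>c\<in>UNIV. hm H a b c * rho c t q))"
    by (subst sum_rotate3[symmetric]) (simp only: sum_distrib_left)
  also have "\<dots> = (\<Sum>a\<in>UNIV. \<Sum>b\<in>UNIV. \<Sum>r<m. x a * y b * (rho a t r * rho b r q))"
    by (simp only: rep_mult[OF Y tq, symmetric] sum_distrib_left)
  also have "\<dots> = (\<Sum>r<m. \<Sum>a\<in>UNIV. x a * rho a t r * (\<Sum>b\<in>UNIV. y b * rho b r q))"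
    by (subst sum_rotate3) (simp add: sum_distrib_left sum_distrib_right ac_simps)
  also have "\<dots> = (\<Sum>r<m. act rho x t r * act rho y r q)"
    by (simp only: act_def sum_distrib_right[symmetric])
  finally show ?thesis .
qed

lemma act_sum: "act rho (\<lambda>c. \<Sum>i\<in>I. g i c) t q = (\<Sum>i\<in>I. act rho (g i) t q)"
  unfolding act_def sum_distrib_right by (rule sum.swap)

lemma act_scale: "act rho (\<lambda>c. r * g c) t q = r * act rho g t q"
  by (simp add: act_def sum_distrib_left mult.assoc)

lemma act_unit: "is_rep H m rho \<Longrightarrow> t < m \<Longrightarrow> q < m \<Longrightarrow> act rho (hu H) t q = kdelta t q"
  by (simp add: act_def rep_unit)

lemma Lplus_subset_HLplus:
  assumes "is_hopf H"
  shows "Lplus H R p \<subseteq> HLplus H R p"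
proof
  fix l assume "l \<in> Lplus H R p"
  then show "l \<in> HLplus H R p"
    unfolding HLplus_def
    by (intro CollectI exI[of _ "1::nat"] exI[of _ "\<lambda>_. hu H"] exI[of _ "\<lambda>_. l"])
       (simp add: hmul_unit_left[OF assms])
qed

lemma in_quotient_rep_iff_Lplus_acts_trivially:
  assumes H: "is_hopf H" and Y: "is_rep H m rho"
  shows "in_quotient_rep H R p m rho \<longleftrightarrow>
    (\<forall>l\<in>Lplus H R p. \<forall>t q. t < m \<longrightarrow> q < m \<longrightarrow> act rho l t q = 0)"
proof
  assume "in_quotient_rep H R p m rho"
  then show "\<forall>l\<in>Lplus H R p. \<forall>t q. t < m \<longrightarrow> q < m \<longrightarrow> act rho l t q = 0"
    using Lplus_subset_HLplus[OF H] unfolding in_quotient_rep_def by blast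
next
  assume L: "\<forall>l\<in>Lplus H R p. \<forall>t q. t < m \<longrightarrow> q < m \<longrightarrow> act rho l t q = 0"
  show "in_quotient_rep H R p m rho"
    unfolding in_quotient_rep_def
  proof (intro ballI allI impI)
    fix z t q assume "z \<in> HLplus H R p" and tq: "t < m" "q < m"
    then obtain N :: nat and h l where l: "\<forall>i<N. l i \<in> Lplus H R p"
      and z: "z = (\<lambda>c. \<Sum>i<N. hmul H (h i) (l i) c)"
      unfolding HLplus_def by auto
    have "act rho z t q = (\<Sum>i<N. \<Sum>r<m. act rho (h i) t r * act rho (l i) r q)"
      by (simp add: z act_sum act_hmul[OF Y tq])
    then show "act rho z t q = 0"
      using l L tq by simp
  qed
qed

text \<open>Since hu K b is the counit of Lgen b (counit_Lgen), this says that L acts through its counit.\<close>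

definition L_acts_by_counit ::
    "('b::finite, 'k::field) hopf_sc \<Rightarrow> ('a::finite, 'k) hopf_sc \<Rightarrow> ('a \<Rightarrow> 'a \<Rightarrow> 'k) \<Rightarrow> ('a \<Rightarrow> 'b \<Rightarrow> 'k)
      \<Rightarrow> nat \<Rightarrow> ('a \<Rightarrow> nat \<Rightarrow> nat \<Rightarrow> 'k) \<Rightarrow> bool" where
  "L_acts_by_counit K H R p m rho \<longleftrightarrow>
     (\<forall>b t q. t < m \<longrightarrow> q < m \<longrightarrow> act rho (Lgen H R p b) t q = hu K b * kdelta t q)"

lemma counit_span_Lgen:
  assumes H: "is_hopf H" and Q: "is_quasitriangular H R" and P: "is_hopf_map H K p"
  shows "(\<Sum>a\<in>UNIV. (\<Sum>b\<in>UNIV. f b * Lgen H R p b a) * he H a) = (\<Sum>b\<in>UNIV. f b * hu K b)"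
proof -
  have "(\<Sum>a\<in>UNIV. (\<Sum>b\<in>UNIV. f b * Lgen H R p b a) * he H a) =
      (\<Sum>b\<in>UNIV. f b * (\<Sum>a\<in>UNIV. Lgen H R p b a * he H a))"
    unfolding sum_distrib_left sum_distrib_right by (subst sum.swap) (simp add: ac_simps)
  then show ?thesis by (simp add: counit_Lgen[OF H Q P])
qed

lemma Lplus_acts_trivially_iff_L_acts_by_counit:
  assumes H: "is_hopf H" and Q: "is_quasitriangular H R" and P: "is_hopf_map H K p"
    and Y: "is_rep H m rho"
  shows "(\<forall>l\<in>Lplus H R p. \<forall>t q. t < m \<longrightarrow> q < m \<longrightarrow> act rho l t q = 0) \<longleftrightarrow>
    L_acts_by_counit K H R p m rho"
proof
  assume L: "\<forall>l\<in>Lplus H R p. \<forall>t q. t < m \<longrightarrow> q < m \<longrightarrow> act rho l t q = 0"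
  show "L_acts_by_counit K H R p m rho"
    unfolding L_acts_by_counit_def
  proof (intro allI impI)
    fix b t q assume tq: "t < m" "q < m"
    define f where "f b' = kdelta b b' - hu K b * he K b'" for b'
    define x where "x = (\<lambda>v. \<Sum>b'\<in>UNIV. f b' * Lgen H R p b' v)"
    have x: "x v = Lgen H R p b v - hu K b * hu H v" for v
    proof -
      have "x v = (\<Sum>b'\<in>UNIV. kdelta b b' * Lgen H R p b' v) - hu K b * (\<Sum>b'\<in>UNIV. he K b' * Lgen H R p b' v)"
        unfolding x_def f_def left_diff_distrib sum_subtractf sum_distrib_left by (simp only: mult.assoc)
      then show ?thesis by (simp add: sum_counit_Lgen[OF H Q P])
    qed
    have "(\<Sum>a\<in>UNIV. x a * he H a) =
        (\<Sum>a\<in>UNIV. Lgen H R p b a * he H a) - hu K b * (\<Sum>a\<in>UNIV. hu H a * he H a)"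
      by (simp add: x left_diff_distrib sum_subtractf sum_distrib_left mult.assoc)
    then have "(\<Sum>a\<in>UNIV. x a * he H a) = 0"
      by (simp add: counit_Lgen[OF H Q P] he_hu[OF H])
    then have "x \<in> Lplus H R p"
      unfolding Lplus_def Lset_eq_span_Lgen x_def by blast
    with L tq have "act rho x t q = 0" by blast
    moreover have "act rho x t q = act rho (Lgen H R p b) t q - hu K b * act rho (hu H) t q"
      by (simp add: x act_def left_diff_distrib sum_subtractf sum_distrib_left mult.assoc)
    ultimately show "act rho (Lgen H R p b) t q = hu K b * kdelta t q"
      by (simp add: act_unit[OF Y tq])
  qed
next
  assume L: "L_acts_by_counit K H R p m rho"
  show "\<forall>l\<in>Lplus H R p. \<forall>t q. t < m \<longrightarrow> q < m \<longrightarrow> act rho l t q = 0"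
  proof (intro ballI allI impI)
    fix l t q assume l: "l \<in> Lplus H R p" and tq: "t < m" "q < m"
    then obtain f where lf: "l = (\<lambda>v. \<Sum>b\<in>UNIV. f b * Lgen H R p b v)"
      and "(\<Sum>a\<in>UNIV. l a * he H a) = 0"
      unfolding Lplus_def Lset_eq_span_Lgen by blast
    then have counit: "(\<Sum>b\<in>UNIV. f b * hu K b) = 0"
      by (simp add: counit_span_Lgen[OF H Q P])
    have "act rho l t q = (\<Sum>b\<in>UNIV. f b * hu K b) * kdelta t q"
      using L tq by (simp add: lf act_sum act_scale L_acts_by_counit_def sum_distrib_right ac_simps)
    then show "act rho l t q = 0" by (simp add: counit)
  qed
qed

section \<open>The double braiding\<close>

lemma double_braid_monodromy:
  assumes X: "is_rep H n rhoX" and Y: "is_rep H m rhoY" and st: "s < n" "t < m"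
  shows "braid R m rhoY n rhoX (braid R n rhoX m rhoY v) (s, t) =
    (\<Sum>c\<in>UNIV. \<Sum>d\<in>UNIV. \<Sum>p<n. \<Sum>q<m. monodromy H R (c, d) * (rhoX c s p * rhoY d t q * v (p, q)))"
proof -
  have "braid R m rhoY n rhoX (braid R n rhoX m rhoY v) (s, t) =
     (\<Sum>a\<in>UNIV. \<Sum>b\<in>UNIV. R a b * (\<Sum>i<n. \<Sum>j<m. rhoX b s i * rhoY a t j *
        (\<Sum>a'\<in>UNIV. \<Sum>b'\<in>UNIV. R a' b' * (\<Sum>j'<m. \<Sum>i'<n. rhoY b' j j' * rhoX a' i i' * v (i', j')))))"
    using st by (simp add: braid_def)
  also have "\<dots> = (\<Sum>a\<in>UNIV. \<Sum>b\<in>UNIV. \<Sum>i<n. \<Sum>j<m. \<Sum>a'\<in>UNIV. \<Sum>b'\<in>UNIV. \<Sum>j'<m. \<Sum>i'<n.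
        R a b * (rhoX b s i * rhoY a t j * (R a' b' * (rhoY b' j j' * rhoX a' i i' * v (i', j')))))"
    by (simp add: sum_distrib_left)
  also have "\<dots> = (\<Sum>a\<in>UNIV. \<Sum>b\<in>UNIV. \<Sum>a'\<in>UNIV. \<Sum>b'\<in>UNIV. \<Sum>i'<n. \<Sum>j'<m. \<Sum>i<n. \<Sum>j<m.
        R a b * (rhoX b s i * rhoY a t j * (R a' b' * (rhoY b' j j' * rhoX a' i i' * v (i', j')))))"
    by (simp only: sum.cartesian_product)
       (rule sum.reindex_bij_witness[where i="\<lambda>(a,b,a',b',i',j',i,j). (a,b,i,j,a',b',j',i')"
          and j="\<lambda>(a,b,i,j,a',b',j',i'). (a,b,a',b',i',j',i,j)"], auto)
  also have "\<dots> = (\<Sum>a\<in>UNIV. \<Sum>b\<in>UNIV. \<Sum>a'\<in>UNIV. \<Sum>b'\<in>UNIV. \<Sum>i'<n. \<Sum>j'<m.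
        R a b * R a' b' * v (i', j') * (\<Sum>i<n. rhoX b s i * rhoX a' i i' * (\<Sum>j<m. rhoY a t j * rhoY b' j j')))"
    by (simp add: sum_distrib_left sum_distrib_right ac_simps)
  also have "\<dots> = (\<Sum>a\<in>UNIV. \<Sum>b\<in>UNIV. \<Sum>a'\<in>UNIV. \<Sum>b'\<in>UNIV. \<Sum>i'<n. \<Sum>j'<m.
        R a b * R a' b' * v (i', j') * ((\<Sum>i<n. rhoX b s i * rhoX a' i i') * (\<Sum>j<m. rhoY a t j * rhoY b' j j')))"
    by (simp only: sum_distrib_right[symmetric])
  also have "\<dots> = (\<Sum>a\<in>UNIV. \<Sum>b\<in>UNIV. \<Sum>a'\<in>UNIV. \<Sum>b'\<in>UNIV. \<Sum>i'<n. \<Sum>j'<m.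
        R a b * R a' b' * v (i', j') * ((\<Sum>c\<in>UNIV. hm H b a' c * rhoX c s i') * (\<Sum>d\<in>UNIV. hm H a b' d * rhoY d t j')))"
    apply (intro sum.cong refl)
    using st by (simp add: rep_mult[OF X] rep_mult[OF Y])
  also have "\<dots> = (\<Sum>a\<in>UNIV. \<Sum>b\<in>UNIV. \<Sum>a'\<in>UNIV. \<Sum>b'\<in>UNIV. \<Sum>i'<n. \<Sum>j'<m. \<Sum>d\<in>UNIV. \<Sum>c\<in>UNIV.
        R a b * R a' b' * v (i', j') * (hm H b a' c * rhoX c s i' * (hm H a b' d * rhoY d t j')))"
    by (simp only: sum_distrib_left sum_distrib_right)
  also have "\<dots> = (\<Sum>c\<in>UNIV. \<Sum>d\<in>UNIV. \<Sum>i'<n. \<Sum>j'<m. \<Sum>b\<in>UNIV. \<Sum>a\<in>UNIV. \<Sum>a'\<in>UNIV. \<Sum>b'\<in>UNIV.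
        R a b * R a' b' * v (i', j') * (hm H b a' c * rhoX c s i' * (hm H a b' d * rhoY d t j')))"
    by (simp only: sum.cartesian_product)
       (rule sum.reindex_bij_witness[where i="\<lambda>(c,d,i',j',b,a,a',b'). (a,b,a',b',i',j',d,c)"
          and j="\<lambda>(a,b,a',b',i',j',d,c). (c,d,i',j',b,a,a',b')"], auto)
  also have "\<dots> = (\<Sum>c\<in>UNIV. \<Sum>d\<in>UNIV. \<Sum>p<n. \<Sum>q<m. monodromy H R (c, d) * (rhoX c s p * rhoY d t q * v (p, q)))"
    by (simp add: monodromy_expand sum_distrib_left sum_distrib_right ac_simps)
  finally show ?thesis .
qed

lemma double_braid_pullback:
  assumes X: "is_rep H n rhoX" and Y: "is_rep H m rhoY" and st: "s < n" "t < m"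
    and pb: "\<And>a i j. i < n \<Longrightarrow> j < n \<Longrightarrow> rhoX a i j = (\<Sum>b\<in>UNIV. p a b * sigma b i j)"
  shows "braid R m rhoY n rhoX (braid R n rhoX m rhoY v) (s, t) =
    (\<Sum>i<n. \<Sum>j<m. (\<Sum>b\<in>UNIV. sigma b s i * act rhoY (Lgen H R p b) t j) * v (i, j))"
proof -
  have "braid R m rhoY n rhoX (braid R n rhoX m rhoY v) (s, t) =
      (\<Sum>c\<in>UNIV. \<Sum>d\<in>UNIV. \<Sum>i<n. \<Sum>j<m. \<Sum>b\<in>UNIV.
        monodromy H R (c, d) * (p c b * sigma b s i * rhoY d t j * v (i, j)))"
    using st by (simp add: double_braid_monodromy[OF X Y st] pb sum_distrib_left sum_distrib_right)
  also have "\<dots> = (\<Sum>i<n. \<Sum>j<m. \<Sum>b\<in>UNIV. \<Sum>d\<in>UNIV. \<Sum>c\<in>UNIV.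
        monodromy H R (c, d) * (p c b * sigma b s i * rhoY d t j * v (i, j)))"
    by (simp only: sum.cartesian_product)
       (rule sum.reindex_bij_witness[where i="\<lambda>(i,j,b,d,c). (c,d,i,j,b)" and j="\<lambda>(c,d,i,j,b). (i,j,b,d,c)"], auto)
  also have "\<dots> = (\<Sum>i<n. \<Sum>j<m. (\<Sum>b\<in>UNIV. sigma b s i * act rhoY (Lgen H R p b) t j) * v (i, j))"
    by (simp add: act_def Lgen_def sum_distrib_left sum_distrib_right ac_simps)
  finally show ?thesis .
qed

definition pullback :: "('a \<Rightarrow> 'b::finite \<Rightarrow> 'k::field) \<Rightarrow> ('b \<Rightarrow> nat \<Rightarrow> nat \<Rightarrow> 'k) \<Rightarrow> 'a \<Rightarrow> nat \<Rightarrow> nat \<Rightarrow> 'k" where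
  "pullback p sigma = (\<lambda>a i j. \<Sum>b\<in>UNIV. p a b * sigma b i j)"

lemma pullback_is_rep:
  assumes P: "is_hopf_map H K p" and S: "is_rep K n sigma"
  shows "is_rep H n (pullback p sigma)"
  unfolding is_rep_def pullback_def
proof (intro conjI allI impI)
  fix a a' i j assume ij: "i < n" "j < n"
  have "(\<Sum>c\<in>UNIV. hm H a a' c * (\<Sum>b\<in>UNIV. p c b * sigma b i j)) =
      (\<Sum>b\<in>UNIV. (\<Sum>c\<in>UNIV. hm H a a' c * p c b) * sigma b i j)"
    unfolding sum_distrib_left sum_distrib_right by (subst sum.swap) (simp add: ac_simps)
  also have "\<dots> = (\<Sum>b\<in>UNIV. \<Sum>b1\<in>UNIV. \<Sum>b2\<in>UNIV. p a b1 * p a' b2 * (hm K b1 b2 b * sigma b i j))"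
    by (simp add: hopf_map_mult[OF P] sum_distrib_right mult.assoc)
  also have "\<dots> = (\<Sum>b1\<in>UNIV. \<Sum>b2\<in>UNIV. \<Sum>r<n. p a b1 * p a' b2 * (sigma b1 i r * sigma b2 r j))"
    by (subst sum_rotate3[symmetric]) (simp only: sum_distrib_left[symmetric] rep_mult[OF S ij])
  also have "\<dots> = (\<Sum>r<n. (\<Sum>b\<in>UNIV. p a b * sigma b i r) * (\<Sum>b\<in>UNIV. p a' b * sigma b r j))"
    by (subst sum_rotate3) (simp add: sum_distrib_left sum_distrib_right ac_simps)
  finally show "(\<Sum>c\<in>UNIV. hm H a a' c * (\<Sum>b\<in>UNIV. p c b * sigma b i j)) =
      (\<Sum>r<n. (\<Sum>b\<in>UNIV. p a b * sigma b i r) * (\<Sum>b\<in>UNIV. p a' b * sigma b r j))" .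
next
  fix i j assume ij: "i < n" "j < n"
  have "(\<Sum>a\<in>UNIV. hu H a * (\<Sum>b\<in>UNIV. p a b * sigma b i j)) = (\<Sum>b\<in>UNIV. (\<Sum>a\<in>UNIV. hu H a * p a b) * sigma b i j)"
    unfolding sum_distrib_left sum_distrib_right by (subst sum.swap) (simp add: ac_simps)
  also have "\<dots> = kdelta i j"
    by (simp only: hopf_map_unit[OF P] rep_unit[OF S ij])
  finally show "(\<Sum>a\<in>UNIV. hu H a * (\<Sum>b\<in>UNIV. p a b * sigma b i j)) = kdelta i j" .
qed

lemma pullback_rep_pullback: "is_rep K n sigma \<Longrightarrow> pullback_rep K p n (pullback p sigma)"
  unfolding pullback_rep_def pullback_def by blast

text \<open>The left regular representation of K in the basis e 0, ..., e (N - 1): the (i, j) entry of b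
  is the coefficient of e i in b e j.\<close>

definition regular_rep :: "('b::finite, 'k::field) hopf_sc \<Rightarrow> (nat \<Rightarrow> 'b) \<Rightarrow> 'b \<Rightarrow> nat \<Rightarrow> nat \<Rightarrow> 'k" where
  "regular_rep K e = (\<lambda>b i j. hm K b (e j) (e i))"

lemma regular_rep_is_rep:
  assumes K: "is_hopf K" and e: "bij_betw e {..<N} (UNIV :: 'b::finite set)"
  shows "is_rep K N (regular_rep K e)"
  unfolding is_rep_def regular_rep_def
proof (intro conjI allI impI)
  fix a b i j assume "i < N" "j < N"
  have "(\<Sum>r<N. hm K a (e r) (e i) * hm K b (e j) (e r)) = (\<Sum>w\<in>UNIV. hm K b (e j) w * hm K a w (e i))"
    using sum.reindex_bij_betw[OF e, of "\<lambda>w. hm K a w (e i) * hm K b (e j) w"] by (simp add: mult.commute)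
  then show "(\<Sum>c\<in>UNIV. hm K a b c * hm K c (e j) (e i)) = (\<Sum>r<N. hm K a (e r) (e i) * hm K b (e j) (e r))"
    by (simp add: hm_assoc[OF K])
next
  fix i j assume "i < N" "j < N"
  then have "e j = e i \<longleftrightarrow> j = i" using e unfolding bij_betw_def inj_on_def by auto
  then show "(\<Sum>a\<in>UNIV. hu K a * hm K a (e j) (e i)) = kdelta i j"
    by (simp add: hm_unit_left[OF K] kdelta_def)
qed

lemma double_braid_trivial_if_L_acts_by_counit:
  assumes Y: "is_rep H m rhoY" and L: "L_acts_by_counit K H R p m rhoY"
    and X: "is_rep H n rhoX" and "pullback_rep K p n rhoX" and v: "in_tensor n m v"
  shows "braid R m rhoY n rhoX (braid R n rhoX m rhoY v) = v"
proof
  obtain sigma where S: "is_rep K n sigma"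
    and pb: "\<And>a i j. i < n \<Longrightarrow> j < n \<Longrightarrow> rhoX a i j = (\<Sum>b\<in>UNIV. p a b * sigma b i j)"
    using \<open>pullback_rep K p n rhoX\<close> unfolding pullback_rep_def by blast
  fix st :: "nat \<times> nat"
  obtain s t where st: "st = (s, t)" by (cases st)
  show "braid R m rhoY n rhoX (braid R n rhoX m rhoY v) st = v st"
  proof (cases "s < n \<and> t < m")
    case True
    have "act rhoY (Lgen H R p b) t j = hu K b * kdelta t j" if "j < m" for b j
      using L True that unfolding L_acts_by_counit_def by blast
    then have "braid R m rhoY n rhoX (braid R n rhoX m rhoY v) (s, t) =
        (\<Sum>i<n. \<Sum>j<m. (\<Sum>b\<in>UNIV. hu K b * sigma b s i) * kdelta t j * v (i, j))"
      using True
      by (simp add: double_braid_pullback[OF X Y _ _ pb] sum_distrib_left sum_distrib_right ac_simps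
          cong: if_cong)
    also have "\<dots> = v (s, t)"
      using True by (simp add: rep_unit[OF S])
    finally show ?thesis by (simp add: st)
  next
    case False
    then show ?thesis using v by (auto simp: st braid_def in_tensor_def)
  qed
qed

lemma double_braid_trivial_coefficients:
  fixes sigma :: "'b::finite \<Rightarrow> nat \<Rightarrow> nat \<Rightarrow> 'k::field"
  assumes X: "is_rep H n (pullback p sigma)" and Y: "is_rep H m rhoY"
    and triv: "\<And>v. in_tensor n m v \<Longrightarrow>
      braid R m rhoY n (pullback p sigma) (braid R n (pullback p sigma) m rhoY v) = v"
    and s: "s < n" and j: "j < n" and t: "t < m" and q: "q < m"
  shows "(\<Sum>b\<in>UNIV. sigma b s j * act rhoY (Lgen H R p b) t q) = kdelta s j * kdelta t q"
proof -
  define v :: "nat \<times> nat \<Rightarrow> 'k" where "v = (\<lambda>(i, l). kdelta i j * kdelta l q)"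
  have "in_tensor n m v" using j q by (simp add: in_tensor_def v_def kdelta_def)
  then have "v (s, t) = braid R m rhoY n (pullback p sigma) (braid R n (pullback p sigma) m rhoY v) (s, t)"
    by (simp add: triv)
  also have "\<dots> = (\<Sum>i<n. \<Sum>l<m. (\<Sum>b\<in>UNIV. sigma b s i * act rhoY (Lgen H R p b) t l) * v (i, l))"
    by (rule double_braid_pullback[OF X Y s t]) (simp add: pullback_def)
  also have "\<dots> = (\<Sum>b\<in>UNIV. sigma b s j * act rhoY (Lgen H R p b) t q)"
    using j q by (simp add: v_def)
  finally show ?thesis by (simp add: v_def)
qed

lemma L_acts_by_counit_if_regular_double_braid_trivial:
  assumes K: "is_hopf K" and e: "bij_betw e {..<N} (UNIV :: 'b set)" and Y: "is_rep H m rhoY"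
    and X: "is_rep H N (pullback p (regular_rep K e))"
    and triv: "\<And>v. in_tensor N m v \<Longrightarrow>
      braid R m rhoY N (pullback p (regular_rep K e)) (braid R N (pullback p (regular_rep K e)) m rhoY v) = v"
  shows "L_acts_by_counit K H R (p :: 'a::finite \<Rightarrow> 'b::finite \<Rightarrow> 'k::field) m rhoY"
  unfolding L_acts_by_counit_def
proof (intro allI impI)
  fix b t q assume t: "t < m" and q: "q < m"
  obtain s where s: "s < N" and b: "b = e s"
    using e unfolding bij_betw_def by auto
  have "act rhoY (Lgen H R p b) t q =
      (\<Sum>b'\<in>UNIV. act rhoY (Lgen H R p b') t q * (\<Sum>w\<in>UNIV. hu K w * hm K b' w (e s)))"
    by (simp add: hm_unit_right[OF K] b)
  also have "\<dots> = (\<Sum>w\<in>UNIV. hu K w * (\<Sum>b'\<in>UNIV. hm K b' w (e s) * act rhoY (Lgen H R p b') t q))"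
    unfolding sum_distrib_left by (subst sum.swap) (simp add: ac_simps)
  also have "\<dots> = (\<Sum>j<N. hu K (e j) * (\<Sum>b'\<in>UNIV. regular_rep K e b' s j * act rhoY (Lgen H R p b') t q))"
    unfolding regular_rep_def by (rule sum.reindex_bij_betw[OF e, symmetric])
  also have "\<dots> = (\<Sum>j<N. hu K (e j) * (kdelta s j * kdelta t q))"
    using double_braid_trivial_coefficients[OF X Y triv s _ t q] by simp
  also have "\<dots> = hu K b * kdelta t q"
    using s by (simp add: b)
  finally show "act rhoY (Lgen H R p b) t q = hu K b * kdelta t q" .
qed

theorem mainTheorem3:
  fixes H :: "('a::finite, 'k::field) hopf_sc" and K :: "('b::finite, 'k) hopf_sc"
    and R :: "'a \<Rightarrow> 'a \<Rightarrow> 'k" and p :: "'a \<Rightarrow> 'b \<Rightarrow> 'k"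
    and m :: nat and rhoY :: "'a \<Rightarrow> nat \<Rightarrow> nat \<Rightarrow> 'k"
  assumes "is_hopf H" and "is_quasitriangular H R" and "is_hopf K"
    and "is_hopf_map H K p" and "surj (lin_map p)"
    and "is_rep H m rhoY"
  shows "in_quotient_rep H R p m rhoY \<longleftrightarrow>
     (\<forall>n rhoX. is_rep H n rhoX \<longrightarrow> pullback_rep K p n rhoX \<longrightarrow>
        (\<forall>v. in_tensor n m v \<longrightarrow> braid R m rhoY n rhoX (braid R n rhoX m rhoY v) = v))"
proof -
  note H = assms(1) and Q = assms(2) and K = assms(3) and P = assms(4) and Y = assms(6)
  obtain e where e: "bij_betw e {..<card (UNIV :: 'b set)} (UNIV :: 'b set)"
    using ex_bij_betw_nat_finite[of "UNIV :: 'b set"] by (auto simp: atLeast0LessThan)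
  have S: "is_rep K (card (UNIV :: 'b set)) (regular_rep K e)"
    by (rule regular_rep_is_rep[OF K e])
  have "L_acts_by_counit K H R p m rhoY \<longleftrightarrow>
     (\<forall>n rhoX. is_rep H n rhoX \<longrightarrow> pullback_rep K p n rhoX \<longrightarrow>
        (\<forall>v. in_tensor n m v \<longrightarrow> braid R m rhoY n rhoX (braid R n rhoX m rhoY v) = v))"
    using double_braid_trivial_if_L_acts_by_counit[OF Y]
      L_acts_by_counit_if_regular_double_braid_trivial[OF K e Y pullback_is_rep[OF P S]]
      pullback_is_rep[OF P S] pullback_rep_pullback[OF S] by blast
  then show ?thesis
    unfolding in_quotient_rep_iff_Lplus_acts_trivially[OF H Y] Lplus_acts_trivially_iff_L_acts_by_counit[OF H Q P Y] .
qed

end
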